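(* Let $\phi(x,z)$ be an associate of the additive formal group $F(x,y)=x+y$ with $\phi(x,z)\ne x$. Then $f(\phi(x,z),x)\ne0$ for every nonzero $f(x_1,x)\in\mathbb{C}((x_1,x))$.
   Context: An associate of $F(x,y)=x+y$ is $\phi(x,z)\in\mathbb{C}((x))[[z]]$ with $\phi(x,0)=x$ and $\phi(\phi(x,x_2),x_0)=\phi(x,x_0+x_2)$. $\mathbb{C}((x_1,x))=\mathbb{C}[[x_1,x]][x_1^{-1},x^{-1}]$. For $f(x_1,x)=\sum_{m,n\ge k}a(m,n)x_1^mx^n$, $f(\phi(x,z),x):=\sum_{m,n}a(m,n)\phi(x,z)^mx^n\in\mathbb{C}((x))[[z]]$, where $\phi(x,z)^m$ for $m<0$ is the inverse power in $\mathbb{C}((x))[[z]]$ (writing $\phi(x,z)=x+zA$, $\phi^m=\sum_{i\ge0}\binom mi x^{m-i}z^iA^i$). *)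

theory Defs
  imports "HOL-Analysis.Analysis" "HOL-Computational_Algebra.Formal_Laurent_Series"
begin

text \<open>C((x))[[z]] is rendered as the type complex fls fps: a formal power series
  in z whose coefficients are formal Laurent series in x.\<close>

type_synonym lzser = "complex fls fps"

definition phi_pow :: "lzser \<Rightarrow> int \<Rightarrow> lzser" where
  "phi_pow \<phi> m = (if 0 \<le> m then \<phi> ^ nat m else inverse \<phi> ^ nat (- m))"

text \<open>For g in C((x)), g(phi(x,z)) = sum_m g_m phi(x,z)^m in C((x))[[z]];
  subst1 g phi j e is the coefficient of z^j x^e (a finite sum in the relevant cases).\<close>
definition subst1 :: "complex fls \<Rightarrow> lzser \<Rightarrow> nat \<Rightarrow> int \<Rightarrow> complex" where
  "subst1 g \<phi> j e = (\<Sum>\<^sub>\<infinity> m. fls_nth g m * fls_nth (fps_nth (phi_pow \<phi> m) j) e)"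

text \<open>Associate of the additive formal group F(x,y) = x + y:
  phi(x,0) = x and phi(phi(x,x2),x0) = phi(x,x0+x2), compared coefficientwise
  at x0^j x2^i x^e.\<close>
definition is_additive_associate :: "lzser \<Rightarrow> bool" where
  "is_additive_associate \<phi> \<longleftrightarrow>
     fps_nth \<phi> 0 = fls_X \<and>
     (\<forall>j i e. subst1 (fps_nth \<phi> j) \<phi> i e
              = of_nat ((i + j) choose j) * fls_nth (fps_nth \<phi> (i + j)) e)"

text \<open>Elements of C((x1,x)) = C[[x1,x]][x1^-1,x^-1]: coefficient functions
  a(m,n) with support in {m >= k, n >= k} for some k.\<close>
definition in_C_x1x :: "(int \<Rightarrow> int \<Rightarrow> complex) \<Rightarrow> bool" where
  "in_C_x1x a \<longleftrightarrow> (\<exists>k. \<forall>m n. a m n \<noteq> 0 \<longrightarrow> k \<le> m \<and> k \<le> n)"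

text \<open>f(phi(x,z),x) = sum_{m,n} a(m,n) phi(x,z)^m x^n; subst2 a phi j e is its
  coefficient of z^j x^e.\<close>
definition subst2 :: "(int \<Rightarrow> int \<Rightarrow> complex) \<Rightarrow> lzser \<Rightarrow> nat \<Rightarrow> int \<Rightarrow> complex" where
  "subst2 a \<phi> j e =
     (\<Sum>\<^sub>\<infinity> (m, n). a m n * fls_nth (fps_nth (phi_pow \<phi> m * fps_const (fls_X_intpow n)) j) e)"

end

theory Submission
  imports Defs
begin

(* Let p = phi$1, the z-linear coefficient of phi. The part of phi(phi(x,x2),x0) = phi(x,x0+x2)
   linear in x2 says that phi is annihilated by the derivation d/dz - p(x) d/dx, hence so is every
   integer power phi^m; and p <> 0 because phi <> x. If c x^r is the lowest term of p and h = r - 1,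
   the resulting recursion for the z-coefficients of phi^m shows that the lowest term of the
   coefficient of z^j is c^j/j! * m(m+h)...(m+(j-1)h) x^(m+jh). So if d is the least total degree
   occurring in f, the coefficient of z^j x^(d+jh) in f(phi,x) is
   c^j/j! * sum_m a(m,d-m) m(m+h)...(m+(j-1)h), and as the products m(m+h)...(m+(j-1)h) have degree
   j in m, these vanish for all j only if every a(m,d-m) does. *)

no_notation vec_nth (infixl \<open>$\<close> 90)
unbundle fps_syntax

lemma infsum_UNIV_eq_sum:
  fixes f :: "'a \<Rightarrow> 'b::{comm_monoid_add, t2_space}"
  assumes "finite S" and "\<And>x. x \<notin> S \<Longrightarrow> f x = 0"
  shows "infsum f UNIV = sum f S"
proof -
  have "infsum f UNIV = infsum f S"
    by (rule infsum_cong_neutral) (use assms in auto)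
  then show ?thesis
    using assms(1) by simp
qed

lemma fls_times_nth_lower_bounds:
  fixes f g :: "'a::comm_ring_1 fls"
  assumes "\<And>i. i < a \<Longrightarrow> f $$ i = 0" and "\<And>i. i < b \<Longrightarrow> g $$ i = 0"
  shows "(f * g) $$ n = (\<Sum>i=a..n - b. f $$ i * g $$ (n - i))"
proof (cases "f = 0 \<or> g = 0")
  case True
  then show ?thesis by auto
next
  case False
  then have "a \<le> fls_subdegree f" and "b \<le> fls_subdegree g"
    using assms by (auto intro!: fls_subdegree_geI)
  have "(f * g) $$ n = (\<Sum>i=fls_subdegree f..n - fls_subdegree g. f $$ i * g $$ (n - i))"
    by (rule fls_times_nth(2))
  also have "\<dots> = (\<Sum>i=a..n - b. f $$ i * g $$ (n - i))"
  proof (rule sum.mono_neutral_left)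
    show "\<forall>i\<in>{a..n - b} - {fls_subdegree f..n - fls_subdegree g}. f $$ i * g $$ (n - i) = 0"
      by (force simp: not_le)
  qed (use \<open>a \<le> fls_subdegree f\<close> \<open>b \<le> fls_subdegree g\<close> in auto)
  finally show ?thesis .
qed

lemma fls_times_deriv_nth_eq_infsum:
  fixes g p :: "'a::{comm_ring_1, t2_space} fls"
  shows "(\<Sum>\<^sub>\<infinity>m. g $$ m * (of_int m * p $$ (e - m + 1))) = (p * fls_deriv g) $$ e"
proof -
  define dg dp where "dg = fls_subdegree g" and "dp = fls_subdegree p"
  have "(\<Sum>\<^sub>\<infinity>m. g $$ m * (of_int m * p $$ (e - m + 1)))
      = (\<Sum>m\<in>{dg..e + 1 - dp}. g $$ m * (of_int m * p $$ (e - m + 1)))"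
    by (rule infsum_UNIV_eq_sum) (auto simp: dg_def dp_def not_le)
  also have "\<dots> = (\<Sum>i\<in>{dp..e - (dg - 1)}. p $$ i * fls_deriv g $$ (e - i))"
    by (rule sum.reindex_bij_witness[of _ "\<lambda>i. e + 1 - i" "\<lambda>m. e + 1 - m"])
       (auto simp: algebra_simps)
  also have "\<dots> = (p * fls_deriv g) $$ e"
    by (rule fls_times_nth_lower_bounds[symmetric]) (auto simp: dp_def dg_def)
  finally show ?thesis .
qed

lemma fls_times_deriv_nth_lowest:
  fixes p q :: "'a::comm_ring_1 fls"
  assumes "\<And>n. n < s \<Longrightarrow> q $$ n = 0"
  defines "r \<equiv> fls_subdegree p"
  shows "n < r + s - 1 \<Longrightarrow> (p * fls_deriv q) $$ n = 0"
    and "(p * fls_deriv q) $$ (r + s - 1) = p $$ r * (of_int s * q $$ s)"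
proof -
  have prod: "(p * fls_deriv q) $$ n = (\<Sum>i=r..n - (s - 1). p $$ i * fls_deriv q $$ (n - i))" for n
    by (rule fls_times_nth_lower_bounds) (simp_all add: assms r_def)
  show "n < r + s - 1 \<Longrightarrow> (p * fls_deriv q) $$ n = 0"
    by (simp add: prod)
  show "(p * fls_deriv q) $$ (r + s - 1) = p $$ r * (of_int s * q $$ s)"
    by (simp add: prod)
qed

lemma fps_times_const_X_intpow_nth:
  "((F :: 'a::comm_ring_1 fls fps) * fps_const (fls_X_intpow n)) $ j $$ e = F $ j $$ (e - n)"
  by (simp only: fps_mult_right_const_nth fls_X_intpow_times_conv_shift fls_shift_nth) simp

definition pochhammer_step :: "'a::comm_semiring_1 \<Rightarrow> 'a \<Rightarrow> nat \<Rightarrow> 'a" where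
  "pochhammer_step x h j = (\<Prod>i<j. x + of_nat i * h)"

lemma pochhammer_step_0 [simp]: "pochhammer_step x h 0 = 1"
  by (simp add: pochhammer_step_def)

lemma pochhammer_step_Suc: "pochhammer_step x h (Suc j) = pochhammer_step x h j * (x + of_nat j * h)"
  by (simp add: pochhammer_step_def)

(* Since (x - t) P_j(x) = P_(j+1)(x) - (t + j h) P_j(x) for P_j = pochhammer_step x h j, the
   vanishing of all these sums survives multiplying the coefficients by x i - t. *)
lemma sum_pochhammer_step_mult_prod_eq_0:
  fixes b x :: "'i \<Rightarrow> 'a::field"
  assumes "finite T" and "\<And>j. (\<Sum>i\<in>I. b i * pochhammer_step (x i) h j) = 0"
  shows "(\<Sum>i\<in>I. b i * (\<Prod>t\<in>T. x i - t) * pochhammer_step (x i) h j) = 0"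
  using assms(1)
proof (induction T arbitrary: j rule: finite_induct)
  case empty
  then show ?case using assms(2) by simp
next
  case (insert t T)
  define S where "S j = (\<Sum>i\<in>I. b i * (\<Prod>t\<in>T. x i - t) * pochhammer_step (x i) h j)" for j
  have "(\<Sum>i\<in>I. b i * (\<Prod>t\<in>insert t T. x i - t) * pochhammer_step (x i) h j)
      = (\<Sum>i\<in>I. b i * (\<Prod>t\<in>T. x i - t) *
           (pochhammer_step (x i) h (Suc j) - (t + of_nat j * h) * pochhammer_step (x i) h j))"
    using insert.hyps by (intro sum.cong) (auto simp: pochhammer_step_Suc algebra_simps)
  also have "\<dots> = S (Suc j) - (t + of_nat j * h) * S j"
    by (simp add: S_def algebra_simps sum_subtractf sum_distrib_left)
  also have "\<dots> = 0"
    using insert.IH by (simp add: S_def)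
  finally show ?case .
qed

lemma sum_pochhammer_step_eq_0_imp_eq_0:
  fixes b x :: "'i \<Rightarrow> 'a::field"
  assumes "finite I" and "inj_on x I" and "\<And>j. (\<Sum>i\<in>I. b i * pochhammer_step (x i) h j) = 0"
    and "i0 \<in> I"
  shows "b i0 = 0"
proof -
  define T where "T = x ` (I - {i0})"
  have vanish: "(\<Prod>t\<in>T. x i - t) = 0 \<longleftrightarrow> i \<noteq> i0" if "i \<in> I" for i
    using assms(1,2,4) that by (auto simp: T_def prod_zero_iff inj_on_def)
  have "0 = (\<Sum>i\<in>I. b i * (\<Prod>t\<in>T. x i - t) * pochhammer_step (x i) h 0)"
    using sum_pochhammer_step_mult_prod_eq_0[where T=T and I=I and b=b and x=x and h=h and j=0] assms(1,3) by (simp add: T_def)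
  also have "\<dots> = b i0 * (\<Prod>t\<in>T. x i0 - t)"
    using assms(1,4) vanish by (subst sum.remove[of _ i0]) (auto intro: sum.neutral)
  finally show ?thesis
    using vanish[OF assms(4)] by simp
qed

definition x_deriv :: "'a::field fls fps \<Rightarrow> 'a fls fps" where
  "x_deriv F = Abs_fps (\<lambda>j. fls_deriv (F $ j))"

lemma x_deriv_nth [simp]: "x_deriv F $ j = fls_deriv (F $ j)"
  by (simp add: x_deriv_def)

lemma x_deriv_mult: "x_deriv (F * G) = x_deriv F * G + F * x_deriv G"
proof (rule fps_ext)
  fix n
  have "x_deriv (F * G) $ n
      = (\<Sum>i=0..n. fls_deriv (F $ i) * G $ (n - i)) + (\<Sum>i=0..n. F $ i * fls_deriv (G $ (n - i)))"
    by (simp add: fps_mult_nth fls_deriv_sum sum.distrib[symmetric] add.commute)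
  then show "x_deriv (F * G) $ n = (x_deriv F * G + F * x_deriv G) $ n"
    by (simp only: fps_add_nth fps_mult_nth x_deriv_nth)
qed

lemma x_deriv_one [simp]: "x_deriv 1 = 0"
  by (rule fps_ext) (simp add: fps_one_nth)

definition flow_deriv :: "'a::field fls \<Rightarrow> 'a fls fps \<Rightarrow> 'a fls fps" where
  "flow_deriv p F = fps_deriv F - fps_const p * x_deriv F"

lemma flow_deriv_nth: "flow_deriv p F $ j = of_nat (j + 1) * F $ (j + 1) - p * fls_deriv (F $ j)"
  by (simp add: flow_deriv_def)

lemma flow_deriv_mult: "flow_deriv p (F * G) = flow_deriv p F * G + F * flow_deriv p G"
  by (simp add: flow_deriv_def x_deriv_mult algebra_simps)

lemma flow_deriv_one [simp]: "flow_deriv p 1 = 0"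
  by (simp add: flow_deriv_def)

lemma flow_deriv_power_eq_0: "flow_deriv p F = 0 \<Longrightarrow> flow_deriv p (F ^ n) = 0"
  by (induction n) (simp_all add: flow_deriv_mult)

lemma flow_deriv_power_nth_0: "flow_deriv p F $ 0 = 0 \<Longrightarrow> flow_deriv p (F ^ n) $ 0 = 0"
  by (induction n) (simp_all add: flow_deriv_mult)

lemma flow_deriv_inverse_eq_0:
  assumes "flow_deriv p F = 0" and "F $ 0 \<noteq> 0"
  shows "flow_deriv p (inverse F) = 0"
proof -
  have "F * flow_deriv p (inverse F) = flow_deriv p (F * inverse F)"
    using assms(1) by (simp add: flow_deriv_mult)
  also have "\<dots> = 0"
    using inverse_mult_eq_1'[OF assms(2)] by simp
  finally show ?thesis
    using assms(2) by auto
qed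

lemma flow_deriv_inverse_nth_0:
  assumes "flow_deriv p F $ 0 = 0" and "F $ 0 \<noteq> 0"
  shows "flow_deriv p (inverse F) $ 0 = 0"
proof -
  have "F $ 0 * flow_deriv p (inverse F) $ 0 = flow_deriv p (F * inverse F) $ 0"
    using assms(1) by (simp add: flow_deriv_mult)
  also have "\<dots> = 0"
    using inverse_mult_eq_1'[OF assms(2)] by simp
  finally show ?thesis
    using assms(2) by simp
qed

lemma flow_deriv_phi_pow_eq_0:
  "flow_deriv p F = 0 \<Longrightarrow> F $ 0 \<noteq> 0 \<Longrightarrow> flow_deriv p (phi_pow F m) = 0"
  by (simp add: phi_pow_def flow_deriv_power_eq_0 flow_deriv_inverse_eq_0)

lemma flow_deriv_phi_pow_nth_0:
  "flow_deriv p F $ 0 = 0 \<Longrightarrow> F $ 0 \<noteq> 0 \<Longrightarrow> flow_deriv p (phi_pow F m) $ 0 = 0"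
  by (simp add: phi_pow_def flow_deriv_power_nth_0 flow_deriv_inverse_nth_0)

lemma phi_pow_nth_0:
  assumes "F $ 0 = fls_X"
  shows "phi_pow F m $ 0 = fls_X_intpow m"
proof -
  have X: "(fls_X :: complex fls) = fls_X_intpow 1"
    by (simp add: fls_X_conv_shift_1)
  have X': "inverse (fls_X :: complex fls) = fls_X_intpow (-1)"
    by (simp only: X fls_inverse_X_intpow)
  show ?thesis
  proof (cases "0 \<le> m")
    case True
    then show ?thesis
      using assms fls_X_intpow_power[of 1 "nat m"] by (simp add: phi_pow_def fps_nth_power_0 X)
  next
    case False
    then show ?thesis
      using assms fls_X_intpow_power[of "-1" "nat (- m)"] by (simp add: phi_pow_def fps_nth_power_0 X')
  qed
qed

lemma phi_pow_nth_1:
  assumes "F $ 0 = fls_X"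
  shows "phi_pow F m $ 1 $$ e = of_int m * F $ 1 $$ (e - m + 1)"
proof -
  define p where "p = F $ 1"
  have "flow_deriv p F $ 0 = 0"
    using assms by (simp add: flow_deriv_nth p_def)
  then have "flow_deriv p (phi_pow F m) $ 0 = 0"
    by (rule flow_deriv_phi_pow_nth_0) (simp add: assms)
  then have "phi_pow F m $ 1 = p * fls_deriv (fls_X_intpow m)"
    using phi_pow_nth_0[OF assms, of m] by (simp add: flow_deriv_nth)
  also have "\<dots> = of_int m * (p * fls_X_intpow (m - 1))"
    by (simp add: fls_deriv_X_intpow mult.left_commute)
  finally show ?thesis
    by (simp only: fls_mult_of_int_nth fls_X_intpow_times_conv_shift fls_shift_nth p_def)
       (simp add: algebra_simps)
qed

lemma additive_associate_nth_0: "is_additive_associate \<phi> \<Longrightarrow> \<phi> $ 0 = fls_X"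
  by (simp add: is_additive_associate_def)

lemma additive_associate_flow_deriv_eq_0:
  assumes "is_additive_associate \<phi>"
  shows "flow_deriv (\<phi> $ 1) \<phi> = 0"
proof (intro fps_ext fls_eqI)
  fix j e
  have "of_nat (j + 1) * \<phi> $ (j + 1) $$ e = subst1 (\<phi> $ j) \<phi> 1 e"
    using assms by (simp add: is_additive_associate_def add.commute)
  also have "\<dots> = (\<phi> $ 1 * fls_deriv (\<phi> $ j)) $$ e"
    unfolding subst1_def phi_pow_nth_1[OF additive_associate_nth_0[OF assms]]
    by (rule fls_times_deriv_nth_eq_infsum)
  finally show "flow_deriv (\<phi> $ 1) \<phi> $ j $$ e = 0 $ j $$ e"
    by (simp only: flow_deriv_nth fls_minus_nth fls_mult_of_nat_nth fps_zero_nth) simp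
qed

lemma additive_associate_phi_pow_nth_Suc:
  assumes "is_additive_associate \<phi>"
  shows "of_nat (Suc j) * phi_pow \<phi> m $ Suc j $$ n = (\<phi> $ 1 * fls_deriv (phi_pow \<phi> m $ j)) $$ n"
proof -
  have "flow_deriv (\<phi> $ 1) (phi_pow \<phi> m) = 0"
    using additive_associate_flow_deriv_eq_0[OF assms] additive_associate_nth_0[OF assms]
    by (intro flow_deriv_phi_pow_eq_0) simp_all
  then have "flow_deriv (\<phi> $ 1) (phi_pow \<phi> m) $ j $$ n = 0"
    by simp
  then show ?thesis
    by (simp only: flow_deriv_nth fls_minus_nth fls_mult_of_nat_nth Suc_eq_plus1) simp
qed

lemma additive_associate_nth_1_neq_0:
  assumes "is_additive_associate \<phi>" and "\<phi> \<noteq> fps_const fls_X"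
  shows "\<phi> $ 1 \<noteq> 0"
proof
  assume "\<phi> $ 1 = 0"
  then have "fps_deriv \<phi> = 0"
    using additive_associate_flow_deriv_eq_0[OF assms(1)] by (simp add: flow_deriv_def)
  then show False
    using assms additive_associate_nth_0[OF assms(1)] by (metis fps_deriv_eq_0_iff)
qed

lemma additive_associate_phi_pow_nth_lowest:
  assumes "is_additive_associate \<phi>"
  defines "r \<equiv> fls_subdegree (\<phi> $ 1)"
  defines "c \<equiv> \<phi> $ 1 $$ r"
  shows "(\<forall>n < m + int j * (r - 1). phi_pow \<phi> m $ j $$ n = 0) \<and>
    phi_pow \<phi> m $ j $$ (m + int j * (r - 1))
      = c ^ j * pochhammer_step (of_int m) (of_int r - 1) j / fact j"
proof (induction j)
  case 0
  show ?case
    using phi_pow_nth_0[OF additive_associate_nth_0[OF assms(1)], of m] by simp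
next
  case (Suc j)
  define s where "s = m + int j * (r - 1)"
  define q where "q = phi_pow \<phi> m $ j"
  have low: "\<And>n. n < s \<Longrightarrow> q $$ n = 0"
    and lead: "q $$ s = c ^ j * pochhammer_step (of_int m) (of_int r - 1) j / fact j"
    using Suc.IH by (auto simp: s_def q_def)
  have rec: "phi_pow \<phi> m $ Suc j $$ n = (\<phi> $ 1 * fls_deriv q) $$ n / of_nat (Suc j)" for n
    using additive_associate_phi_pow_nth_Suc[OF assms(1), of j m n]
    by (simp add: q_def field_simps del: of_nat_Suc)
  note prod = fls_times_deriv_nth_lowest[where s=s and q=q and p="\<phi> $ 1", OF low, folded r_def, folded c_def]
  have "\<forall>n < r + s - 1. phi_pow \<phi> m $ Suc j $$ n = 0"
    using prod(1) by (simp add: rec)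
  moreover have "phi_pow \<phi> m $ Suc j $$ (r + s - 1) = c * (of_int s * q $$ s) / of_nat (Suc j)"
    by (simp only: rec prod(2))
  moreover have "\<dots> = c ^ Suc j * pochhammer_step (of_int m) (of_int r - 1) (Suc j) / fact (Suc j)"
    unfolding lead by (simp add: pochhammer_step_Suc s_def field_simps)
  moreover have "m + int (Suc j) * (r - 1) = r + s - 1"
    by (simp add: s_def algebra_simps)
  ultimately show ?case
    by simp
qed

lemma in_C_x1x_obtain_min_total_degree:
  assumes "in_C_x1x a" and "a \<noteq> (\<lambda>m n. 0)"
  obtains k m0 n0 where "\<And>m n. a m n \<noteq> 0 \<Longrightarrow> k \<le> m \<and> k \<le> n"
    and "a m0 n0 \<noteq> 0" and "\<And>m n. a m n \<noteq> 0 \<Longrightarrow> m0 + n0 \<le> m + n"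
proof -
  obtain k where k: "\<And>m n. a m n \<noteq> 0 \<Longrightarrow> k \<le> m \<and> k \<le> n"
    using assms(1) by (auto simp: in_C_x1x_def)
  obtain m1 n1 where "a m1 n1 \<noteq> 0"
    using assms(2) by (auto simp: fun_eq_iff)
  then obtain mn0 where mn0: "a (fst mn0) (snd mn0) \<noteq> 0"
    and min: "\<And>mn. a (fst mn) (snd mn) \<noteq> 0 \<Longrightarrow> nat (fst mn0 + snd mn0 - 2 * k) \<le> nat (fst mn + snd mn - 2 * k)"
    using ex_has_least_nat[of "\<lambda>mn. a (fst mn) (snd mn) \<noteq> 0" "(m1, n1)" "\<lambda>mn. nat (fst mn + snd mn - 2 * k)"]
    by auto
  have "fst mn0 + snd mn0 \<le> m + n" if "a m n \<noteq> 0" for m n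
    using min[of "(m, n)"] k[OF that] k[OF mn0] that by (simp; linarith)
  with k mn0 show ?thesis
    by (rule that)
qed

lemma subst2_lowest_total_degree:
  assumes assoc: "is_additive_associate \<phi>"
    and k: "\<And>m n. a m n \<noteq> 0 \<Longrightarrow> k \<le> m \<and> k \<le> n"
    and d: "\<And>m n. a m n \<noteq> 0 \<Longrightarrow> d \<le> m + n"
  defines "r \<equiv> fls_subdegree (\<phi> $ 1)"
  defines "c \<equiv> \<phi> $ 1 $$ r"
  shows "subst2 a \<phi> j (d + int j * (r - 1))
    = c ^ j / fact j * (\<Sum>m\<in>{k..d - k}. a m (d - m) * pochhammer_step (of_int m) (of_int r - 1) j)"
proof -
  define e where "e = d + int j * (r - 1)"
  define t where "t = (\<lambda>(m, n). a m n * phi_pow \<phi> m $ j $$ (e - n))"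
  note lowest = additive_associate_phi_pow_nth_lowest[OF assoc, folded r_def, folded c_def]
  have t_off: "t (m, n) = 0" if "m + n \<noteq> d" for m n
  proof (cases "a m n = 0")
    case False
    then have "e - n < m + int j * (r - 1)"
      using d[OF False] that by (simp add: e_def)
    then show ?thesis
      using lowest by (simp add: t_def)
  qed (simp add: t_def)
  have "subst2 a \<phi> j e = (\<Sum>\<^sub>\<infinity>mn. t mn)"
    unfolding subst2_def t_def fps_times_const_X_intpow_nth ..
  also have "\<dots> = sum t ((\<lambda>m. (m, d - m)) ` {k..d - k})"
  proof (rule infsum_UNIV_eq_sum)
    fix mn :: "int \<times> int"
    assume "mn \<notin> (\<lambda>m. (m, d - m)) ` {k..d - k}"
    then show "t mn = 0"
      using k t_off by (cases mn) (force simp: t_def)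
  qed simp
  also have "\<dots> = (\<Sum>m\<in>{k..d - k}. t (m, d - m))"
    by (simp add: sum.reindex inj_on_def)
  also have "\<dots> = (\<Sum>m\<in>{k..d - k}. c ^ j / fact j * (a m (d - m) * pochhammer_step (of_int m) (of_int r - 1) j))"
  proof (rule sum.cong)
    fix m
    have shift: "e - (d - m) = m + int j * (r - 1)"
      by (simp add: e_def)
    have "phi_pow \<phi> m $ j $$ (e - (d - m)) = c ^ j * pochhammer_step (of_int m) (of_int r - 1) j / fact j"
      unfolding shift using lowest[where m=m and j=j] by (rule conjunct2)
    then show "t (m, d - m) = c ^ j / fact j * (a m (d - m) * pochhammer_step (of_int m) (of_int r - 1) j)"
      by (simp add: t_def)
  qed simp
  finally show ?thesis
    by (simp only: e_def sum_distrib_left)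
qed

theorem lemma2p7:
  fixes \<phi> :: "complex fls fps" and a :: "int \<Rightarrow> int \<Rightarrow> complex"
  assumes "is_additive_associate \<phi>"
    and "\<phi> \<noteq> fps_const fls_X"
    and "in_C_x1x a"
    and "a \<noteq> (\<lambda>m n. 0)"
  shows "\<exists>j e. subst2 a \<phi> j e \<noteq> 0"
proof (rule ccontr)
  assume "\<not> (\<exists>j e. subst2 a \<phi> j e \<noteq> 0)"
  then have subst2_eq_0: "subst2 a \<phi> j e = 0" for j e
    by simp
  obtain k m0 n0 where k: "\<And>m n. a m n \<noteq> 0 \<Longrightarrow> k \<le> m \<and> k \<le> n"
    and a0: "a m0 n0 \<noteq> 0" and d: "\<And>m n. a m n \<noteq> 0 \<Longrightarrow> m0 + n0 \<le> m + n"
    using in_C_x1x_obtain_min_total_degree[OF assms(3,4)] by metis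
  define r where "r = fls_subdegree (\<phi> $ 1)"
  define I where "I = {k..m0 + n0 - k}"
  have c: "\<phi> $ 1 $$ r \<noteq> 0"
    using additive_associate_nth_1_neq_0[OF assms(1,2)] by (simp add: r_def)
  note lowest_coeff =
    subst2_lowest_total_degree[where a = a and d = "m0 + n0", OF assms(1) k d, folded r_def, folded I_def]
  have "(\<phi> $ 1 $$ r) ^ j / fact j
      * (\<Sum>m\<in>I. a m (m0 + n0 - m) * pochhammer_step (of_int m) (of_int r - 1) j) = 0" for j
    by (rule trans[OF lowest_coeff[symmetric] subst2_eq_0])
  then have sums: "(\<Sum>m\<in>I. a m (m0 + n0 - m) * pochhammer_step (of_int m) (of_int r - 1) j) = 0" for j
    using c by simp
  have inj: "inj_on (of_int :: int \<Rightarrow> complex) I"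
    by (simp add: inj_on_def)
  have m0: "m0 \<in> I"
    using k[OF a0] by (simp add: I_def)
  have "a m0 (m0 + n0 - m0) = 0"
    by (rule sum_pochhammer_step_eq_0_imp_eq_0[where b = "\<lambda>m. a m (m0 + n0 - m)", OF _ inj sums m0])
      (simp add: I_def)
  with a0 show False
    by simp
qed

end
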